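(* Let $\mathcal D$ be any probability distribution over $\mathbb R$ and let $(N,u)\sim H(n,\mathcal D)$ be a random additively separable hedonic game. Then $$\lim_{n\to\infty}\mathbb P\big((N,u)\text{ admits a contractually Nash-stable partition}\big)=1.$$
   Context: Additively separable hedonic game: a finite agent set $N$ and utilities $u_a(b)\in\mathbb R$ for ordered pairs $a\ne b$; for a coalition $C\ni a$, $u_a(C)=\sum_{b\in C\setminus\{a\}}u_a(b)$ (empty sum $0$). Random model $H(n,\mathcal D)$: $|N|=n$ and all $u_a(b)$, $a\ne b$, i.i.d. from $\mathcal D$. For a partition $\pi$, $\pi(a)$ is $a$'s coalition. A Nash deviation of $a$ is a move of $a$ alone to another coalition $C\in\pi$ or to a new singleton, such that $a$'s new coalition gives $a$ strictly higher utility. $\mathrm{FavorIn}(C,a)=\{b\in C\setminus\{a\}: u_b(C\cup\{a\})>u_b(C\setminus\{a\})\}$. A contractual deviation is a Nash deviation by $a$ with $\mathrm{FavorIn}(\pi(a),a)=\emptyset$; $\pi$ is contractually Nash-stable if no contractual deviation exists. *)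

theory Defs
  imports "HOL-Probability.Probability" "HOL-Library.Disjoint_Sets"
begin

text \<open>Agents are the natural numbers 0,...,n-1. A utility profile is a function
  u :: nat \<times> nat \<Rightarrow> real, where u (a,b) is the utility agent a derives from b;
  only the values at pairs (a,b) with a \<noteq> b, a,b < n are relevant.\<close>

definition coal_util :: "(nat \<times> nat \<Rightarrow> real) \<Rightarrow> nat \<Rightarrow> nat set \<Rightarrow> real" where
  "coal_util u a C = (\<Sum>b\<in>C - {a}. u (a, b))"

definition coalition_of :: "nat set set \<Rightarrow> nat \<Rightarrow> nat set" where
  "coalition_of \<pi> a = (THE C. C \<in> \<pi> \<and> a \<in> C)"

definition favor_in :: "(nat \<times> nat \<Rightarrow> real) \<Rightarrow> nat set \<Rightarrow> nat \<Rightarrow> nat set" where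
  "favor_in u C a = {b \<in> C - {a}. coal_util u b (C \<union> {a}) > coal_util u b (C - {a})}"

text \<open>Nash deviation of agent a to a coalition C of \<pi> other than its own, or to a new
  singleton (represented by C = {}); the new coalition is C \<union> {a}.\<close>
definition nash_deviation :: "(nat \<times> nat \<Rightarrow> real) \<Rightarrow> nat set set \<Rightarrow> nat \<Rightarrow> nat set \<Rightarrow> bool" where
  "nash_deviation u \<pi> a C \<longleftrightarrow>
     C \<in> insert {} (\<pi> - {coalition_of \<pi> a}) \<and>
     coal_util u a (C \<union> {a}) > coal_util u a (coalition_of \<pi> a)"

definition contractual_deviation :: "(nat \<times> nat \<Rightarrow> real) \<Rightarrow> nat set set \<Rightarrow> nat \<Rightarrow> nat set \<Rightarrow> bool" where
  "contractual_deviation u \<pi> a C \<longleftrightarrow>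
     nash_deviation u \<pi> a C \<and> favor_in u (coalition_of \<pi> a) a = {}"

definition contractually_nash_stable :: "nat set \<Rightarrow> (nat \<times> nat \<Rightarrow> real) \<Rightarrow> nat set set \<Rightarrow> bool" where
  "contractually_nash_stable N u \<pi> \<longleftrightarrow>
     partition_on N \<pi> \<and> \<not> (\<exists>a\<in>N. \<exists>C. contractual_deviation u \<pi> a C)"

definition agent_pairs :: "nat \<Rightarrow> (nat \<times> nat) set" where
  "agent_pairs n = {(a, b). a < n \<and> b < n \<and> a \<noteq> b}"

definition random_asg :: "real measure \<Rightarrow> nat \<Rightarrow> (nat \<times> nat \<Rightarrow> real) measure" where
  "random_asg D n = PiM (agent_pairs n) (\<lambda>_. D)"

end

theory Submission
  imports Defs
begin

(* Let q be the probability that a utility drawn from D is nonpositive. If q = 1, then almost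
   surely no agent values anybody positively and the partition into singletons is stable: no move
   can raise a utility above 0. If q < 1, the grand coalition is stable as soon as every agent is
   valued positively by some other agent, because then somebody in the coalition objects to each
   departure; by the union bound over the n agents this fails with probability at most
   n q^(n-1), which tends to 0. *)

lemma coalition_of_eq:
  assumes "partition_on N \<pi>" "C \<in> \<pi>" "a \<in> C"
  shows "coalition_of \<pi> a = C"
  unfolding coalition_of_def
proof (rule the_equality)
  show "\<And>C'. C' \<in> \<pi> \<and> a \<in> C' \<Longrightarrow> C' = C"
    using assms partition_onD2 by (metis disjointD disjoint_iff)
qed (use assms in auto)

lemma coalition_of_mem:
  assumes "partition_on N \<pi>" "a \<in> N"
  shows "coalition_of \<pi> a \<in> \<pi>"
proof -
  obtain C where "C \<in> \<pi>" "a \<in> C"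
    using assms partition_onD1 by blast
  then show ?thesis
    using coalition_of_eq[OF assms(1)] by auto
qed

lemma favor_in_eq:
  assumes "finite C"
  shows "favor_in u C a = {b \<in> C - {a}. u (b, a) > 0}"
proof -
  have "coal_util u b (C \<union> {a}) = coal_util u b (C - {a}) + u (b, a)" if "b \<noteq> a" for b
  proof -
    have "C \<union> {a} - {b} = insert a (C - {a} - {b})"
      using that by auto
    then show ?thesis
      using assms by (simp add: coal_util_def add.commute)
  qed
  then show ?thesis
    by (auto simp: favor_in_def)
qed

lemma contractual_deviation_iff:
  assumes "finite (coalition_of \<pi> a)"
  shows "(\<exists>C. contractual_deviation u \<pi> a C) \<longleftrightarrow>
    (\<forall>b\<in>coalition_of \<pi> a - {a}. u (b, a) \<le> 0) \<and>
    (\<exists>C\<in>insert {} (\<pi> - {coalition_of \<pi> a}).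
       coal_util u a (C \<union> {a}) > coal_util u a (coalition_of \<pi> a))"
  using assms
  by (auto simp: contractual_deviation_def nash_deviation_def favor_in_eq not_less)

lemma grand_coalition_contractually_nash_stable:
  assumes "finite N" "N \<noteq> {}" and liked: "\<forall>a\<in>N. \<exists>b\<in>N. b \<noteq> a \<and> u (b, a) > 0"
  shows "contractually_nash_stable N u {N}"
proof -
  have "favor_in u (coalition_of {N} a) a \<noteq> {}" if "a \<in> N" for a
    using coalition_of_eq[OF partition_on_space[OF \<open>N \<noteq> {}\<close>] _ that] liked that
    by (auto simp: favor_in_eq[OF \<open>finite N\<close>])
  then show ?thesis
    using partition_on_space[OF \<open>N \<noteq> {}\<close>]
    by (auto simp: contractually_nash_stable_def contractual_deviation_def)
qed

lemma singletons_contractually_nash_stable: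
  assumes "\<forall>a\<in>N. \<forall>b\<in>N. a \<noteq> b \<longrightarrow> u (a, b) \<le> 0"
  shows "contractually_nash_stable N u ((\<lambda>a. {a}) ` N)"
proof -
  let ?\<pi> = "(\<lambda>a. {a}) ` N"
  have "\<not> nash_deviation u ?\<pi> a C" if "a \<in> N" for a C
  proof
    have "coalition_of ?\<pi> a = {a}"
      by (rule coalition_of_eq[OF partition_on_singletons]) (use that in auto)
    moreover assume "nash_deviation u ?\<pi> a C"
    ultimately have "C \<subseteq> N" and "coal_util u a (C \<union> {a}) > coal_util u a {a}"
      by (auto simp: nash_deviation_def)
    moreover have "coal_util u a (C \<union> {a}) \<le> 0"
      unfolding coal_util_def using assms that \<open>C \<subseteq> N\<close> by (intro sum_nonpos) auto
    ultimately show False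
      by (simp add: coal_util_def)
  qed
  then show ?thesis
    using partition_on_singletons
    by (auto simp: contractually_nash_stable_def contractual_deviation_def)
qed

context
  fixes D :: "real measure"
  assumes sets_D: "sets D = sets borel"
begin

lemma measurable_component_borel[measurable]:
  "(\<lambda>u. u i) \<in> borel_measurable (PiM I (\<lambda>_. D))"
proof (cases "i \<in> I")
  case True
  then have "(\<lambda>u. u i) \<in> measurable (PiM I (\<lambda>_. D)) D"
    by measurable
  then show ?thesis
    using sets_D measurable_cong_sets by blast
next
  case False
  then have "u i = undefined" if "u \<in> space (PiM I (\<lambda>_. D))" for u
    using that by (auto simp: space_PiM)
  then show ?thesis
    by (subst measurable_cong[where g = "\<lambda>_. undefined"]) auto
qed

lemma borel_measurable_coal_util[measurable]:
  "(\<lambda>u. coal_util u a C) \<in> borel_measurable (PiM I (\<lambda>_. D))"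
  unfolding coal_util_def by measurable

lemma sets_contractually_nash_stable:
  assumes "finite N"
  shows "{u \<in> space (PiM I (\<lambda>_. D)). \<exists>\<pi>. contractually_nash_stable N u \<pi>} \<in> sets (PiM I (\<lambda>_. D))"
proof -
  let ?M = "PiM I (\<lambda>_. D)"
  have deviation: "Measurable.pred ?M (\<lambda>u. \<exists>C. contractual_deviation u \<pi> a C)"
    if "partition_on N \<pi>" "a \<in> N" for \<pi> a
  proof -
    have "coalition_of \<pi> a \<subseteq> N"
      using coalition_of_mem[OF that] partition_onD1[OF that(1)] by blast
    then have "finite (coalition_of \<pi> a)"
      using \<open>finite N\<close> finite_subset by blast
    moreover have "finite \<pi>"
      using finite_elements[OF \<open>finite N\<close> that(1)] .
    ultimately show ?thesis
      unfolding contractual_deviation_iff[OF \<open>finite (coalition_of \<pi> a)\<close>]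
      \<comment> \<open>measurable stops at the finiteness side condition of the bounded \<open>\<exists>C\<close>\<close>
      by measurable (simp add: \<open>finite \<pi>\<close>, measurable)
  qed
  have "Measurable.pred ?M (\<lambda>u. contractually_nash_stable N u \<pi>)" if "partition_on N \<pi>" for \<pi>
  proof -
    have "Measurable.pred ?M (\<lambda>u. \<not> (\<exists>a\<in>N. \<exists>C. contractual_deviation u \<pi> a C))"
      using \<open>finite N\<close> by (intro pred_intros_logic(2) pred_intros_finite(4) deviation[OF that])
    then show ?thesis
      using that by (simp add: contractually_nash_stable_def)
  qed
  then have "Measurable.pred ?M (\<lambda>u. \<exists>\<pi>\<in>{\<pi>. partition_on N \<pi>}. contractually_nash_stable N u \<pi>)"
    using finitely_many_partition_on[OF \<open>finite N\<close>] by (intro pred_intros_finite(4)) auto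
  then show ?thesis
    by (simp add: pred_def contractually_nash_stable_def)
qed

end

lemma PiM_coordinates_in_eq_PiE:
  assumes "J \<subseteq> I" "A \<subseteq> space D"
  shows "{u \<in> space (PiM I (\<lambda>_. D)). \<forall>j\<in>J. u j \<in> A} = PiE I (\<lambda>i. if i \<in> J then A else space D)"
  using assms by (fastforce simp: space_PiM PiE_def extensional_def split: if_splits)

lemma
  assumes "prob_space D" "finite I" "J \<subseteq> I" "A \<in> sets D"
  shows sets_PiM_coordinates_in: "{u \<in> space (PiM I (\<lambda>_. D)). \<forall>j\<in>J. u j \<in> A} \<in> sets (PiM I (\<lambda>_. D))"
    and measure_PiM_coordinates_in:
      "measure (PiM I (\<lambda>_. D)) {u \<in> space (PiM I (\<lambda>_. D)). \<forall>j\<in>J. u j \<in> A} = measure D A ^ card J"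
proof -
  interpret finite_product_prob_space "\<lambda>_. D" I
    using assms(1,2) product_prob_spaceI[of "\<lambda>_. D"]
    by (simp add: finite_product_prob_space_def finite_product_sigma_finite_def
        finite_product_sigma_finite_axioms_def product_prob_space_def)
  have eq: "{u \<in> space (PiM I (\<lambda>_. D)). \<forall>j\<in>J. u j \<in> A} = PiE I (\<lambda>i. if i \<in> J then A else space D)"
    using PiM_coordinates_in_eq_PiE[OF assms(3) sets.sets_into_space[OF assms(4)]] .
  show "{u \<in> space (PiM I (\<lambda>_. D)). \<forall>j\<in>J. u j \<in> A} \<in> sets (PiM I (\<lambda>_. D))"
    unfolding eq using assms(2,4) by (intro sets_PiM_I_finite) auto
  have "measure (PiM I (\<lambda>_. D)) (PiE I (\<lambda>i. if i \<in> J then A else space D))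
      = (\<Prod>i\<in>I. if i \<in> J then measure D A else 1)"
    using assms(4) by (subst prob_times) (auto intro!: prod.cong simp: M.prob_space)
  also have "\<dots> = measure D A ^ card J"
    using assms(2,3) by (simp add: prod.If_cases Int_absorb1)
  finally show "measure (PiM I (\<lambda>_. D)) {u \<in> space (PiM I (\<lambda>_. D)). \<forall>j\<in>J. u j \<in> A} = measure D A ^ card J"
    unfolding eq .
qed

lemma prob_space_random_asg: "prob_space D \<Longrightarrow> prob_space (random_asg D n)"
  unfolding random_asg_def by (intro prob_space_PiM)

lemma finite_agent_pairs: "finite (agent_pairs n)"
  by (rule finite_subset[of _ "{0..<n} \<times> {0..<n}"]) (auto simp: agent_pairs_def)

lemma LIMSEQ_one_minus_n_times_power:
  fixes q :: real
  assumes "0 \<le> q" "q < 1"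
  shows "(\<lambda>n. 1 - real n * q ^ (n - 1)) \<longlonglongrightarrow> 1"
proof -
  have "(\<lambda>n. real n * q ^ n + q ^ n) \<longlonglongrightarrow> 0 + 0"
    using assms by (intro tendsto_add powser_times_n_limit_0 LIMSEQ_power_zero) auto
  then have "(\<lambda>n. real (Suc n) * q ^ (Suc n - 1)) \<longlonglongrightarrow> 0"
    by (simp add: algebra_simps)
  then have "(\<lambda>n. real n * q ^ (n - 1)) \<longlonglongrightarrow> 0"
    by (rule LIMSEQ_imp_Suc)
  then show ?thesis
    using tendsto_diff[OF tendsto_const] by fastforce
qed

context
  fixes D :: "real measure"
  assumes prob_space_D: "prob_space D" and sets_D: "sets D = sets borel"
begin

abbreviation stable_event :: "nat \<Rightarrow> (nat \<times> nat \<Rightarrow> real) set" where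
  "stable_event n \<equiv> {u \<in> space (random_asg D n). \<exists>\<pi>. contractually_nash_stable {0..<n} u \<pi>}"

lemma sets_stable_event: "stable_event n \<in> sets (random_asg D n)"
  unfolding random_asg_def by (intro sets_contractually_nash_stable sets_D) simp

lemma measure_stable_event_eq_1:
  assumes "measure D {..0} = 1"
  shows "measure (random_asg D n) (stable_event n) = 1"
proof -
  let ?M = "random_asg D n"
  interpret M: prob_space ?M
    by (rule prob_space_random_asg[OF prob_space_D])
  let ?nonpositive = "{u \<in> space ?M. \<forall>j\<in>agent_pairs n. u j \<in> {..0}}"
  have "?nonpositive \<subseteq> stable_event n"
  proof
    fix u assume u: "u \<in> ?nonpositive"
    then have "\<forall>a\<in>{0..<n}. \<forall>b\<in>{0..<n}. a \<noteq> b \<longrightarrow> u (a, b) \<le> 0"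
      by (auto simp: agent_pairs_def)
    then show "u \<in> stable_event n"
      using u singletons_contractually_nash_stable[of "{0..<n}" u] by blast
  qed
  then have "M.prob ?nonpositive \<le> M.prob (stable_event n)"
    by (intro M.finite_measure_mono sets_stable_event)
  moreover have "M.prob ?nonpositive = 1"
    unfolding random_asg_def using assms sets_D
      measure_PiM_coordinates_in[OF prob_space_D finite_agent_pairs order_refl, of "{..0}"]
    by simp
  ultimately show ?thesis
    using M.prob_le_1[of "stable_event n"] by linarith
qed

lemma measure_stable_event_ge:
  assumes "n \<ge> 1"
  shows "1 - real n * measure D {..0} ^ (n - 1) \<le> measure (random_asg D n) (stable_event n)"
proof -
  let ?M = "random_asg D n"
  interpret M: prob_space ?M
    by (rule prob_space_random_asg[OF prob_space_D])
  define J where "J a = (\<lambda>b. (b, a)) ` ({0..<n} - {a})" for a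
  define E where "E a = {u \<in> space ?M. \<forall>j\<in>J a. u j \<in> {..0}}" for a
  have J: "J a \<subseteq> agent_pairs n" "card (J a) = n - 1" if "a < n" for a
    using that by (auto simp: J_def agent_pairs_def card_image inj_on_def)
  have E: "E a \<in> sets ?M" "M.prob (E a) = measure D {..0} ^ (n - 1)" if "a < n" for a
    unfolding E_def random_asg_def using J[OF that] sets_D
      sets_PiM_coordinates_in[OF prob_space_D finite_agent_pairs J(1)[OF that], of "{..0}"]
      measure_PiM_coordinates_in[OF prob_space_D finite_agent_pairs J(1)[OF that], of "{..0}"]
    by simp_all
  have "space ?M - (\<Union>a<n. E a) \<subseteq> stable_event n"
  proof
    fix u assume u: "u \<in> space ?M - (\<Union>a<n. E a)"
    then have "\<forall>a\<in>{0..<n}. \<exists>b\<in>{0..<n}. b \<noteq> a \<and> u (b, a) > 0"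
      by (auto simp: E_def J_def not_le)
    then show "u \<in> stable_event n"
      using u grand_coalition_contractually_nash_stable[of "{0..<n}" u] assms by auto
  qed
  then have "M.prob (space ?M - (\<Union>a<n. E a)) \<le> M.prob (stable_event n)"
    by (intro M.finite_measure_mono sets_stable_event)
  moreover have "M.prob (\<Union>a<n. E a) \<le> (\<Sum>a<n. M.prob (E a))"
    using E by (intro M.finite_measure_subadditive_finite) auto
  moreover have "M.prob (space ?M - (\<Union>a<n. E a)) = 1 - M.prob (\<Union>a<n. E a)"
    using E by (intro M.prob_compl) auto
  ultimately show ?thesis
    using E by simp
qed

end

theorem proposition1:
  fixes D :: "real measure"
  assumes "prob_space D" and "sets D = sets borel"
  shows "(\<lambda>n. measure (random_asg D n)
            {u \<in> space (random_asg D n). \<exists>\<pi>. contractually_nash_stable {0..<n} u \<pi>})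
         \<longlonglongrightarrow> 1"
proof (cases "measure D {..0} = 1")
  case True
  then show ?thesis
    using measure_stable_event_eq_1[OF assms] by simp
next
  case False
  interpret D: prob_space D
    by fact
  have "measure D {..0} < 1"
    using False D.prob_le_1 by (simp add: order_less_le)
  show ?thesis
  proof (rule tendsto_sandwich)
    show "\<forall>\<^sub>F n in sequentially. 1 - real n * measure D {..0} ^ (n - 1)
        \<le> measure (random_asg D n) (stable_event D n)"
      using measure_stable_event_ge[OF assms] by (intro eventually_sequentiallyI[of 1])
    show "\<forall>\<^sub>F n in sequentially. measure (random_asg D n) (stable_event D n) \<le> 1"
      using prob_space.prob_le_1[OF prob_space_random_asg[OF assms(1)]] by simp
    show "(\<lambda>n. 1 - real n * measure D {..0} ^ (n - 1)) \<longlonglongrightarrow> 1"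
      by (rule LIMSEQ_one_minus_n_times_power) (simp_all add: \<open>measure D {..0} < 1\<close>)
  qed simp
qed

end
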